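(* Let $V:\mathbb R\to\mathbb R$ be continuous, Lipschitz with constant $1$, and piecewise differentiable. Let $r_k>0$ with $r_k\to0$, $q_k=e^{-r_k}$, and let $b_k:\mathbb R\to\mathbb R$ be continuous piecewise linear functions whose slope is $\pm1$ on each interval $(a,a+1)$, $a\in\mathbb Z$, such that $B_k(\tau):=r_kb_k(\tau/r_k)$ converges uniformly to $V$. Let $t_k\in\mathbb Z$ with $r_kt_k\to\tau$. Then $$\lim_{k\to\infty}r_k\ln\Phi_{b_k}(z,t_k)=-\int_{-\infty}^{\tau}-\tfrac12(1+V'(M))\ln(1-e^Mz^{-1})\,dM+\int_\tau^\infty-\tfrac12(1-V'(M))\ln(1-e^{-M}z)\,dM.$$
   Context: For such $b_k$ and $q=q_k$, let $D_k^+=\{m\in\mathbb Z+\frac12: b_k'(m)=-1\}$ and $D_k^-=\{m\in\mathbb Z+\frac12: b_k'(m)=+1\}$, and $$\Phi_{+,b_k}(z,t)=\prod_{m>t,\,m\in D_k^+}(1-zq_k^m),\qquad\Phi_{-,b_k}(z,t)=\prod_{m<t,\,m\in D_k^-}(1-z^{-1}q_k^{-m}),\qquad \Phi_{b_k}=\Phi_{-,b_k}/\Phi_{+,b_k},$$ with $\ln\Phi_{b_k}$ understood as the sum of principal logarithms of the factors; $\ln$ denotes the principal branch. *)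

theory Defs
  imports "HOL-Analysis.Analysis"
begin

definition piecewise_differentiable_real :: "(real \<Rightarrow> real) \<Rightarrow> bool" where
  "piecewise_differentiable_real V \<longleftrightarrow>
     (\<exists>S. (\<forall>a b. finite (S \<inter> {a..b})) \<and> (\<forall>x. x \<notin> S \<longrightarrow> V differentiable (at x)))"

definition lattice_path :: "(real \<Rightarrow> real) \<Rightarrow> bool" where
  "lattice_path b \<longleftrightarrow> continuous_on UNIV b \<and>
     (\<forall>a::int. \<exists>s\<in>{1, -1::real}. \<forall>x\<in>{real_of_int a<..<real_of_int a + 1}.
        b x = b (real_of_int a) + s * (x - real_of_int a))"

definition Dplus :: "(real \<Rightarrow> real) \<Rightarrow> real set" where
  "Dplus b = {m. (\<exists>j::int. m = real_of_int j + 1/2) \<and> deriv b m = -1}"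

definition Dminus :: "(real \<Rightarrow> real) \<Rightarrow> real set" where
  "Dminus b = {m. (\<exists>j::int. m = real_of_int j + 1/2) \<and> deriv b m = 1}"

text \<open>ln Phi_b(z,t) with parameter q, as the sum of principal logarithms of the
  factors of Phi_- minus those of Phi_+.\<close>
definition lnPhi :: "(real \<Rightarrow> real) \<Rightarrow> real \<Rightarrow> complex \<Rightarrow> real \<Rightarrow> complex" where
  "lnPhi b q z t =
     (\<Sum>\<^sub>\<infinity> m \<in> {m \<in> Dminus b. m < t}. Ln (1 - complex_of_real (q powr (- m)) / z))
   - (\<Sum>\<^sub>\<infinity> m \<in> {m \<in> Dplus b. m > t}. Ln (1 - z * complex_of_real (q powr m)))"

end

theory Submission
  imports Defs "HOL-Real_Asymp.Real_Asymp"
begin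

(* With q = exp (-r), the factor of Phi_- at an ascending half-integer m < t is Ln (1 - exp (r m) / z),
   so r ln Phi_- is the Riemann sum  r * sum L (r m)  over the ascending steps of b, where
   L M = Ln (1 - exp M / z).  It equals the integral over (-inf, r t] of (1 + sigma)/2 * L (cell midpoint),
   sigma = +-1 being the slope of the rescaled path B x = r b (x / r).  Moving from midpoints to points
   costs o(1) as r -> 0, and integrating sigma L = B' L by parts gives B (r t) L (r t) - int B L', which
   tends to V tau L tau - int V L' = int V' L because the B are uniformly 1-Lipschitz and converge to V.
   The decay L M = O(exp M) at -inf supplies every dominating function.  Phi_+ reduces to Phi_- under the
   reflection x -> -x, which exchanges D^+ and D^- and replaces z by 1/z. *)

section \<open>Integrals over half-lines\<close>

lemma has_integral_reflect_image:
  fixes f :: "real \<Rightarrow> 'b::banach"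
  assumes "(f has_integral i) S"
  shows "((\<lambda>x. f (- x)) has_integral i) (uminus ` S)"
proof -
  define F where "F = (\<lambda>x. if x \<in> S then f x else 0)"
  have eq: "(\<lambda>x. if x \<in> uminus ` S then f (- x) else 0) = (\<lambda>x. F (- x))"
    by (auto simp: F_def fun_eq_iff image_iff)
  from assms have F_int: "\<forall>a b. F integrable_on cbox a b" and
    F_lim: "\<forall>e>0. \<exists>B>0. \<forall>a b. ball 0 B \<subseteq> cbox a b \<longrightarrow> norm (integral (cbox a b) F - i) < e"
    unfolding has_integral_alt' F_def by auto
  show ?thesis
    unfolding has_integral_alt' eq
  proof (intro conjI allI impI)
    fix a b :: real
    show "(\<lambda>x. F (- x)) integrable_on cbox a b"
      using F_int integrable_reflect[of F "-a" "-b"] by simp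
  next
    fix e :: real assume "e > 0"
    then obtain B where "B > 0" and B: "\<forall>a b. ball 0 B \<subseteq> cbox a b \<longrightarrow> norm (integral (cbox a b) F - i) < e"
      using F_lim by blast
    show "\<exists>B>0. \<forall>a b. ball 0 B \<subseteq> cbox a b \<longrightarrow> norm (integral (cbox a b) (\<lambda>x. F (- x)) - i) < e"
    proof (intro exI conjI allI impI)
      fix a b :: real assume "ball 0 B \<subseteq> cbox a b"
      have "ball 0 B \<subseteq> cbox (-b) (-a)"
      proof
        fix x :: real assume "x \<in> ball 0 B"
        then have "- x \<in> ball 0 B" by (simp add: dist_real_def)
        then have "- x \<in> cbox a b" using \<open>ball 0 B \<subseteq> cbox a b\<close> by blast
        then show "x \<in> cbox (-b) (-a)" by auto
      qed
      then show "norm (integral (cbox a b) (\<lambda>x. F (- x)) - i) < e"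
        using B integral_reflect[of "-a" "-b" F] by simp
    qed (use \<open>B > 0\<close> in auto)
  qed
qed

lemma has_integral_exp_atMost:
  assumes "a > (0::real)"
  shows "((\<lambda>x. exp (a * x)) has_integral exp (a * T) / a) {..T}"
  using has_integral_reflect_image[OF has_integral_exp_minus_to_infinity[OF assms, of "-T"]]
  by simp

lemma integrable_on_exp_atMost:
  assumes "a > (0::real)"
  shows "(\<lambda>x. c * exp (a * x)) integrable_on {..T}"
  using integrable_on_cmult_left[OF has_integral_integrable[OF has_integral_exp_atMost[OF assms]]]
  by simp

lemma dominated_convergence_atMost:
  fixes g :: "real \<Rightarrow> 'b::euclidean_space"
  assumes h: "h integrable_on {..T}" and g_le: "\<And>x. x \<le> T \<Longrightarrow> norm (g x) \<le> h x"
    and g_int: "\<And>n. g integrable_on {a n..T}" and a: "filterlim a at_bot sequentially"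
  shows "g integrable_on {..T}" "(\<lambda>n. integral {a n..T} g) \<longlonglongrightarrow> integral {..T} g"
proof -
  define F where "F n x = (if x \<in> {a n..T} then g x else 0)" for n x
  have F_int: "(F n has_integral integral {a n..T} g) {..T}" for n
    using has_integral_restrict[of "{a n..T}" "{..T}" g] g_int[of n] unfolding F_def
    by (auto simp: has_integral_integral)
  have F_lim: "(\<lambda>n. F n x) \<longlonglongrightarrow> g x" if "x \<in> {..T}" for x
  proof -
    have "\<forall>\<^sub>F n in sequentially. a n \<le> x" using a by (simp add: filterlim_at_bot)
    then have "\<forall>\<^sub>F n in sequentially. F n x = g x"
      using that by (elim eventually_mono) (auto simp: F_def)
    then show ?thesis by (rule tendsto_eventually)
  qed
  have F_le: "norm (F n x) \<le> h x" if "x \<in> {..T}" for n x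
    using g_le[of x] that by (auto simp: F_def dest: order_trans[OF norm_ge_zero])
  have "g integrable_on {..T}" "(\<lambda>n. integral {..T} (F n)) \<longlonglongrightarrow> integral {..T} g"
    using dominated_convergence[of F "{..T}" h g] F_int h F_le F_lim by (auto simp: integrable_on_def)
  moreover have "integral {..T} (F n) = integral {a n..T} g" for n
    using F_int by (rule integral_unique)
  ultimately show "g integrable_on {..T}" "(\<lambda>n. integral {a n..T} g) \<longlonglongrightarrow> integral {..T} g"
    by simp_all
qed

lemma has_integral_atMost_of_tendsto:
  fixes g :: "real \<Rightarrow> 'b::euclidean_space"
  assumes h: "h integrable_on {..T}" and g_le: "\<And>x. x \<le> T \<Longrightarrow> norm (g x) \<le> h x"
    and g_int: "\<And>n. (g has_integral I n) {a n..T}" and a: "filterlim a at_bot sequentially"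
    and I: "I \<longlonglongrightarrow> I0"
  shows "(g has_integral I0) {..T}"
proof -
  note DC = dominated_convergence_atMost[OF h g_le has_integral_integrable[OF g_int] a]
  have "(\<lambda>n. integral {a n..T} g) = I"
    using g_int by (auto intro: integral_unique)
  with DC(2) I have "I0 = integral {..T} g"
    using LIMSEQ_unique by metis
  with DC(1) show ?thesis
    by (simp add: has_integral_integral)
qed

lemma dominated_convergence_atMost_moving:
  fixes g :: "nat \<Rightarrow> real \<Rightarrow> 'b::euclidean_space"
  assumes g_int: "\<And>k. g k integrable_on {..T k}" and h: "h integrable_on {..U}"
    and g_le: "\<And>k x. x \<le> U \<Longrightarrow> norm (g k x) \<le> h x"
    and g_lim: "\<And>x. x \<le> U \<Longrightarrow> x \<noteq> T0 \<Longrightarrow> (\<lambda>k. g k x) \<longlonglongrightarrow> G x"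
    and T: "T \<longlonglongrightarrow> T0" and TU: "\<And>k. T k \<le> U"
  shows "G integrable_on {..T0}" "(\<lambda>k. integral {..T k} (g k)) \<longlonglongrightarrow> integral {..T0} G"
proof -
  have T0U: "T0 \<le> U" using T TU by (intro LIMSEQ_le_const2) auto
  define S where "S = {..U} - {T0}"
  define F where "F k x = (if x \<in> {..T k} then g k x else 0)" for k x
  define GG where "GG x = (if x \<in> {..T0} then G x else 0)" for x
  have neg1: "negligible {x \<in> {..U} - S. P x}" for P :: "real \<Rightarrow> bool"
    by (rule negligible_subset[of "{T0}"]) (auto simp: S_def)
  have neg2: "negligible {x \<in> S - {..U}. P x}" for P :: "real \<Rightarrow> bool"
    by (rule negligible_subset[OF negligible_empty]) (auto simp: S_def)
  have F_int: "(F k has_integral integral {..T k} (g k)) S" for k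
  proof -
    have "(F k has_integral integral {..T k} (g k)) {..U}"
      using has_integral_restrict[of "{..T k}" "{..U}" "g k"] g_int[of k] TU[of k]
      unfolding F_def by (auto simp: has_integral_integral)
    then show ?thesis using has_integral_spike_set_eq[OF neg1 neg2] by blast
  qed
  have h_int: "h integrable_on S" using integrable_spike_set[OF h neg1 neg2] .
  have F_le: "norm (F k x) \<le> h x" if "x \<in> S" for k x
    using g_le[of x k] that by (auto simp: F_def S_def dest: order_trans[OF norm_ge_zero])
  have F_lim: "(\<lambda>k. F k x) \<longlonglongrightarrow> GG x" if "x \<in> S" for x
  proof (cases "x < T0")
    case True
    then have "\<forall>\<^sub>F k in sequentially. F k x = g k x"
      using T order_tendstoD(1) by (fastforce elim: eventually_mono simp: F_def)
    then have "(\<lambda>k. F k x) \<longlonglongrightarrow> G x \<longleftrightarrow> (\<lambda>k. g k x) \<longlonglongrightarrow> G x"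
      by (rule tendsto_cong)
    with g_lim[of x] that True show ?thesis
      by (auto simp: S_def GG_def)
  next
    case False
    then have "x > T0" using that by (auto simp: S_def)
    then have "\<forall>\<^sub>F k in sequentially. F k x = 0"
      using T order_tendstoD(2) by (fastforce elim: eventually_mono simp: F_def)
    then show ?thesis using \<open>x > T0\<close> by (auto simp: GG_def intro: tendsto_eventually)
  qed
  have DC: "GG integrable_on S" "(\<lambda>k. integral S (F k)) \<longlonglongrightarrow> integral S GG"
    using dominated_convergence[of F S h GG] F_int h_int F_le F_lim by (auto simp: integrable_on_def)
  have "GG integrable_on {..U}" using integrable_spike_set[OF DC(1) neg2 neg1] .
  then show G_int: "G integrable_on {..T0}"
    using has_integral_restrict[of "{..T0}" "{..U}" G] T0U unfolding GG_def integrable_on_def by auto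
  have "integral S GG = integral {..U} GG" using integral_spike_set[OF neg2 neg1] .
  also have "\<dots> = integral {..T0} G"
    using has_integral_restrict[of "{..T0}" "{..U}" G] T0U G_int unfolding GG_def
    by (auto intro!: integral_unique simp: has_integral_integral)
  finally show "(\<lambda>k. integral {..T k} (g k)) \<longlonglongrightarrow> integral {..T0} G"
    using DC(2) F_int integral_unique by (metis (no_types, lifting) ext)
qed

definition exp_bounded_left :: "(real \<Rightarrow> 'a::real_normed_vector) \<Rightarrow> bool" where
  "exp_bounded_left f \<longleftrightarrow> (\<forall>U. \<exists>c. \<forall>x\<le>U. norm (f x) \<le> c * exp x)"

lemma exp_bounded_leftE:
  assumes "exp_bounded_left f"
  obtains c where "c \<ge> 0" "\<And>x. x \<le> U \<Longrightarrow> norm (f x) \<le> c * exp x"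
proof -
  obtain c where c: "\<And>x. x \<le> U \<Longrightarrow> norm (f x) \<le> c * exp x"
    using assms unfolding exp_bounded_left_def by blast
  have "c * exp x \<le> max c 0 * exp x" for x
    by (intro mult_right_mono) auto
  with c that[of "max c 0"] show ?thesis
    by (meson max.cobounded2 order_trans)
qed

lemma exp_bounded_leftI:
  fixes f :: "real \<Rightarrow> 'a::real_normed_vector"
  assumes f_cont: "continuous_on UNIV f" and small: "\<And>x. x \<le> x0 \<Longrightarrow> norm (f x) \<le> c0 * exp x"
  shows "exp_bounded_left f"
  unfolding exp_bounded_left_def
proof
  fix U
  have "compact (f ` {x0..U})"
    by (intro compact_continuous_image continuous_on_subset[OF f_cont]) auto
  then obtain B where B: "\<forall>y \<in> f ` {x0..U}. norm y \<le> B"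
    using compact_imp_bounded bounded_pos by metis
  define c where "c = max c0 (\<bar>B\<bar> / exp x0)"
  have "norm (f x) \<le> c * exp x" if "x \<le> U" for x
  proof (cases "x \<le> x0")
    case True
    then have "norm (f x) \<le> c0 * exp x" by (rule small)
    also have "\<dots> \<le> c * exp x" by (intro mult_right_mono) (auto simp: c_def)
    finally show ?thesis .
  next
    case False
    then have "f x \<in> f ` {x0..U}" using that by auto
    then have "norm (f x) \<le> \<bar>B\<bar> / exp x0 * exp x0" using B by force
    also have "\<dots> \<le> c * exp x" using False by (intro mult_mono) (auto simp: c_def le_max_iff_disj)
    finally show ?thesis .
  qed
  then show "\<exists>c. \<forall>x\<le>U. norm (f x) \<le> c * exp x" by blast
qed

lemma integrable_on_atMost_exp_bounded_left:
  fixes f :: "real \<Rightarrow> 'b::euclidean_space"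
  assumes f_cont: "continuous_on UNIV f" and f_bd: "exp_bounded_left f"
  shows "f integrable_on {..T}"
proof -
  obtain c where c: "\<And>x. x \<le> T \<Longrightarrow> norm (f x) \<le> c * exp (1 * x)"
    using exp_bounded_leftE[OF f_bd, of T] by auto
  have "(\<lambda>x. c * exp (1 * x)) integrable_on {..T}"
    by (rule integrable_on_exp_atMost) simp
  moreover have "f integrable_on {T - real n..T}" for n
    by (intro integrable_continuous_interval continuous_on_subset[OF f_cont]) auto
  moreover have "filterlim (\<lambda>n. T - real n) at_bot sequentially" by real_asymp
  ultimately show ?thesis
    using dominated_convergence_atMost(1)[of "\<lambda>x. c * exp (1 * x)" T f "\<lambda>n. T - real n"] c by simp
qed

lemma convergent_bounded_above:
  fixes X :: "nat \<Rightarrow> real"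
  assumes "X \<longlonglongrightarrow> l"
  obtains U where "\<And>k. X k \<le> U"
proof -
  obtain K where "\<And>k. norm (X k) \<le> K"
    using BseqD[OF convergent_imp_Bseq[OF convergentI[OF assms]]] by blast
  then show ?thesis by (intro that[of K]) (simp add: abs_le_iff)
qed

lemma tendsto_integral_atMost_endpoint:
  fixes g :: "real \<Rightarrow> 'b::euclidean_space"
  assumes g_cont: "continuous_on UNIV g" and g_bd: "exp_bounded_left g" and T: "T \<longlonglongrightarrow> \<tau>"
  shows "(\<lambda>k. integral {..T k} g) \<longlonglongrightarrow> integral {..\<tau>} g"
proof -
  obtain U where TU: "\<And>k. T k \<le> U" using convergent_bounded_above[OF T] by blast
  obtain c where c: "\<And>x. x \<le> U \<Longrightarrow> norm (g x) \<le> c * exp (1 * x)"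
    using exp_bounded_leftE[OF g_bd, of U] by auto
  show ?thesis
    by (rule dominated_convergence_atMost_moving(2)[OF integrable_on_atMost_exp_bounded_left[OF g_cont g_bd]
          integrable_on_exp_atMost c _ T TU]) auto
qed

lemma tendsto_integral_shift_error:
  fixes L :: "real \<Rightarrow> complex"
  assumes L_cont: "continuous_on UNIV L" and L_bd: "exp_bounded_left L"
    and m: "\<And>k x. \<bar>m k x - x\<bar> \<le> r k" and r: "r \<longlonglongrightarrow> 0"
    and a: "\<And>k x. \<bar>a k x\<bar> \<le> 1" and T: "T \<longlonglongrightarrow> \<tau>"
    and err_int: "\<And>k. (\<lambda>x. of_real (a k x) * (L (m k x) - L x)) integrable_on {..T k}"
  shows "(\<lambda>k. integral {..T k} (\<lambda>x. of_real (a k x) * (L (m k x) - L x))) \<longlonglongrightarrow> 0"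
proof -
  obtain U where TU: "\<And>k. T k \<le> U" using convergent_bounded_above[OF T] by blast
  obtain R where rR: "\<And>k. r k \<le> R" using convergent_bounded_above[OF r] by blast
  obtain c where c: "c \<ge> 0" "\<And>x. x \<le> U + R \<Longrightarrow> norm (L x) \<le> c * exp x"
    using exp_bounded_leftE[OF L_bd, of "U + R"] by blast
  have R: "R \<ge> 0" using m[of 0 0] rR[of 0] by linarith
  have err_le: "norm (of_real (a k x) * (L (m k x) - L x)) \<le> 2 * c * exp R * exp (1 * x)"
    if "x \<le> U" for k x
  proof -
    have "norm (L (m k x)) \<le> c * exp (m k x)"
      using m[of k x] rR[of k] that by (intro c(2)) linarith
    also have "\<dots> \<le> c * exp (x + R)"
      using m[of k x] rR[of k] c(1) by (intro mult_left_mono) auto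
    finally have "norm (L (m k x)) \<le> c * exp R * exp x" by (simp add: exp_add mult_ac)
    moreover have "c \<le> c * exp R"
      using c(1) R by (metis mult.right_neutral mult_left_mono one_le_exp_iff)
    then have "norm (L x) \<le> c * exp R * exp x"
      using c that R by (intro order_trans[OF c(2)] mult_right_mono) auto
    ultimately have "norm (L (m k x) - L x) \<le> 2 * c * exp R * exp x"
      using norm_triangle_ineq4[of "L (m k x)" "L x"] by linarith
    moreover have "norm (of_real (a k x) :: complex) \<le> 1" using a[of k x] by simp
    ultimately have "norm (of_real (a k x) :: complex) * norm (L (m k x) - L x) \<le> 1 * (2 * c * exp R * exp x)"
      by (intro mult_mono) auto
    then show ?thesis by (simp add: norm_mult)
  qed
  have err_lim: "(\<lambda>k. of_real (a k x) * (L (m k x) - L x)) \<longlonglongrightarrow> 0" for x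
  proof -
    have lo: "(\<lambda>k. x - r k) \<longlonglongrightarrow> x" and hi: "(\<lambda>k. x + r k) \<longlonglongrightarrow> x"
      using tendsto_diff[OF tendsto_const r] tendsto_add[OF tendsto_const r] by simp_all
    have m_between: "x - r k \<le> m k x" "m k x \<le> x + r k" for k
      using m[of k x] by linarith+
    have m_lim: "(\<lambda>k. m k x) \<longlonglongrightarrow> x"
      by (rule tendsto_sandwich[OF _ _ lo hi]) (simp_all add: m_between)
    have "(\<lambda>k. L (m k x)) \<longlonglongrightarrow> L x"
      by (rule isCont_tendsto_compose[OF _ m_lim]) (use L_cont in \<open>simp add: continuous_on_eq_continuous_at\<close>)
    then have "(\<lambda>k. norm (L (m k x) - L x)) \<longlonglongrightarrow> 0"
      by (intro tendsto_norm_zero LIM_zero)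
    moreover have "\<forall>k. norm (of_real (a k x) * (L (m k x) - L x)) \<le> norm (L (m k x) - L x)"
      using a by (simp add: norm_mult mult_left_le_one_le)
    ultimately show ?thesis
      by (rule Lim_null_comparison[OF always_eventually, rotated])
  qed
  have "(\<lambda>k. integral {..T k} (\<lambda>x. of_real (a k x) * (L (m k x) - L x))) \<longlonglongrightarrow> integral {..\<tau>} (\<lambda>x. 0)"
    by (rule dominated_convergence_atMost_moving(2)[OF err_int integrable_on_exp_atMost err_le _ T TU])
      (use err_lim in auto)
  then show ?thesis by simp
qed

section \<open>Functions of unit slope and integration by parts\<close>

lemma negligible_locally_finite:
  assumes "\<And>a b. finite (S \<inter> {a..b::real})"
  shows "negligible S"
proof -
  have "S = (\<Union>n::nat. S \<inter> {-real n..real n})"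
  proof (intro equalityI subsetI)
    fix x assume "x \<in> S"
    obtain n :: nat where "\<bar>x\<bar> \<le> real n" using real_arch_simple by blast
    with \<open>x \<in> S\<close> show "x \<in> (\<Union>n::nat. S \<inter> {-real n..real n})"
      by (intro UN_I[of n]) auto
  qed auto
  also have "negligible \<dots>"
    using assms by (intro negligible_countable_Union) (auto intro: negligible_finite)
  finally show ?thesis .
qed

(* The bound on w is imposed everywhere, also on the exceptional set C, so that w itself is a
   bounded integrand. *)
definition piecewise_unit_slope :: "real set \<Rightarrow> (real \<Rightarrow> real) \<Rightarrow> (real \<Rightarrow> real) \<Rightarrow> bool" where
  "piecewise_unit_slope C W w \<longleftrightarrow> (\<forall>a b. finite (C \<inter> {a..b})) \<and> continuous_on UNIV W \<and>
     (\<forall>x. x \<notin> C \<longrightarrow> (W has_real_derivative w x) (at x)) \<and> (\<forall>x. \<bar>w x\<bar> \<le> 1)"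

lemma piecewise_unit_slope_lipschitz:
  assumes "piecewise_unit_slope C W w"
  shows "1-lipschitz_on UNIV W"
proof -
  note W = assms[unfolded piecewise_unit_slope_def]
  have ordered: "\<bar>W y - W x\<bar> \<le> y - x" if "x \<le> y" for x y
  proof -
    define w' where "w' u = (if u \<in> C then 0 else w u)" for u
    have "(w' has_integral (W y - W x)) {x..y}"
    proof (rule fundamental_theorem_of_calculus_strong[OF _ that])
      show "finite (C \<inter> {x..y})" using W by blast
      show "continuous_on {x..y} W" using W continuous_on_subset by blast
      fix u assume "u \<in> {x..y} - C \<inter> {x..y}"
      then have "u \<notin> C" by blast
      then show "(W has_vector_derivative w' u) (at u)"
        using W by (simp add: w'_def has_real_derivative_iff_has_vector_derivative)
    qed
    moreover have "norm (w' u) \<le> 1" for u using W by (simp add: w'_def)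
    ultimately have "norm (W y - W x) \<le> 1 * measure lborel (cbox x y)"
      using has_integral_bound[of 1 w'] by (metis box_real(2) zero_le_one)
    then show ?thesis using that by simp
  qed
  show ?thesis
  proof (rule lipschitz_onI)
    fix x y :: real
    show "dist (W x) (W y) \<le> 1 * dist x y"
      using ordered[of x y] ordered[of y x]
      by (cases "x \<le> y") (auto simp: dist_real_def abs_minus_commute)
  qed simp
qed

lemma lipschitz_abs_le_linear:
  fixes W :: "real \<Rightarrow> real"
  assumes "1-lipschitz_on UNIV W"
  shows "\<bar>W x\<bar> \<le> \<bar>W 0\<bar> + \<bar>x\<bar>"
  using lipschitz_onD[OF assms, of x 0] by (simp add: dist_real_def)

lemma lipschitz_has_real_derivative_abs_le:
  fixes V :: "real \<Rightarrow> real"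
  assumes L: "1-lipschitz_on UNIV V" and d: "(V has_real_derivative D) (at x)"
  shows "\<bar>D\<bar> \<le> 1"
proof -
  have lim: "((\<lambda>y. (V y - V x) / (y - x)) \<longlongrightarrow> D) (at x)"
    using d by (simp add: has_field_derivative_iff)
  have "norm ((V y - V x) / (y - x)) \<le> 1" for y
  proof (cases "y = x")
    case False
    have "\<bar>V y - V x\<bar> \<le> \<bar>y - x\<bar>" using lipschitz_onD[OF L, of y x] by (simp add: dist_real_def)
    with False show ?thesis by (simp add: abs_divide divide_le_eq)
  qed simp
  then have "norm D \<le> 1"
    by (intro Lim_norm_ubound[OF _ lim always_eventually]) auto
  then show ?thesis by simp
qed

lemma piecewise_unit_slope_of_lipschitz:
  assumes V_lip: "1-lipschitz_on UNIV V" and V_pw: "piecewise_differentiable_real V"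
  obtains C where "piecewise_unit_slope C V (\<lambda>x. if x \<in> C then 0 else deriv V x)"
proof -
  obtain C where C: "\<And>a b. finite (C \<inter> {a..b})" "\<And>x. x \<notin> C \<Longrightarrow> V differentiable (at x)"
    using V_pw unfolding piecewise_differentiable_real_def by blast
  have V_deriv: "(V has_real_derivative deriv V x) (at x)" if "x \<notin> C" for x
    using C(2)[OF that] by (simp add: DERIV_deriv_iff_real_differentiable)
  have "\<bar>deriv V x\<bar> \<le> 1" if "x \<notin> C" for x
    by (rule lipschitz_has_real_derivative_abs_le[OF V_lip V_deriv[OF that]])
  with C V_deriv lipschitz_on_continuous_on[OF V_lip]
  show ?thesis by (intro that[of C]) (auto simp: piecewise_unit_slope_def)
qed

lemma norm_linear_growth_mult_le:
  fixes y :: complex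
  assumes W: "\<bar>W\<bar> \<le> A + \<bar>x\<bar>" and y: "norm y \<le> c * exp x" and "A \<ge> 0" "c \<ge> 0" "x \<le> T"
  shows "norm (of_real W * y) \<le> c * ((A + \<bar>T\<bar>) * exp (\<bar>T\<bar>/2) + 2) * exp (x/2)"
proof -
  have key: "(A + \<bar>x\<bar>) * exp (x/2) \<le> (A + \<bar>T\<bar>) * exp (\<bar>T\<bar>/2) + 2"
  proof (cases "x \<ge> 0")
    case True
    then have "(A + \<bar>x\<bar>) * exp (x/2) \<le> (A + \<bar>T\<bar>) * exp (\<bar>T\<bar>/2)"
      using assms by (intro mult_mono) auto
    then show ?thesis by simp
  next
    case False
    have "A * exp (x/2) \<le> (A + \<bar>T\<bar>) * exp (\<bar>T\<bar>/2)"
      using assms False by (intro mult_mono) auto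
    moreover have "-x \<le> 2 * exp (-x/2)" using exp_ge_add_one_self[of "-x/2"] by simp
    then have "-x * exp (x/2) \<le> 2 * exp (-x/2) * exp (x/2)" by (intro mult_right_mono) auto
    then have "-x * exp (x/2) \<le> 2" by (simp add: mult.assoc flip: exp_add)
    ultimately show ?thesis using False by (simp add: algebra_simps)
  qed
  have "norm (of_real W * y) \<le> (A + \<bar>x\<bar>) * (c * exp x)"
    unfolding norm_mult using assms by (intro mult_mono) auto
  also have "\<dots> = c * ((A + \<bar>x\<bar>) * exp (x/2)) * exp (x/2)"
    by (simp add: mult_ac flip: exp_add)
  also have "\<dots> \<le> c * ((A + \<bar>T\<bar>) * exp (\<bar>T\<bar>/2) + 2) * exp (x/2)"
    using key \<open>c \<ge> 0\<close> by (intro mult_right_mono mult_left_mono) auto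
  finally show ?thesis .
qed

lemma has_integral_product_rule_interval:
  fixes f f' :: "real \<Rightarrow> complex"
  assumes W: "piecewise_unit_slope C W w"
    and f_deriv: "\<And>x. (f has_vector_derivative f' x) (at x)" and "s \<le> T"
  shows "((\<lambda>x. of_real (w x) * f x + of_real (W x) * f' x) has_integral
           of_real (W T) * f T - of_real (W s) * f s) {s..T}"
proof (rule fundamental_theorem_of_calculus_strong[OF _ \<open>s \<le> T\<close>])
  note W = W[unfolded piecewise_unit_slope_def]
  show "finite (C \<inter> {s..T})" using W by blast
  fix u assume "u \<in> {s..T} - C \<inter> {s..T}"
  then have "((\<lambda>x. complex_of_real (W x)) has_vector_derivative of_real (w u)) (at u)"
    using W by (auto intro: has_vector_derivative_of_real)
  from has_vector_derivative_mult[OF this f_deriv[of u]]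
  show "((\<lambda>x. of_real (W x) * f x) has_vector_derivative of_real (w u) * f u + of_real (W u) * f' u) (at u)"
    by (simp add: algebra_simps)
next
  have "continuous_on UNIV f"
    using f_deriv by (meson continuous_at_imp_continuous_on has_vector_derivative_continuous)
  then show "continuous_on {s..T} (\<lambda>x. of_real (W x) * f x)"
    using W unfolding piecewise_unit_slope_def
    by (intro continuous_intros) (auto intro: continuous_on_subset)
qed

lemma has_integral_by_parts_atMost:
  fixes f f' :: "real \<Rightarrow> complex"
  assumes W: "piecewise_unit_slope C W w"
    and f_deriv: "\<And>x. (f has_vector_derivative f' x) (at x)" and f'_cont: "continuous_on UNIV f'"
    and f_bd: "exp_bounded_left f" and f'_bd: "exp_bounded_left f'"
  shows "(\<lambda>x. of_real (W x) * f' x) integrable_on {..T}"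
    and "((\<lambda>x. of_real (w x) * f x) has_integral
           of_real (W T) * f T - integral {..T} (\<lambda>x. of_real (W x) * f' x)) {..T}"
proof -
  define A where "A = \<bar>W 0\<bar>"
  define K where "K = (A + \<bar>T\<bar>) * exp (\<bar>T\<bar>/2) + 2"
  have W_le: "\<bar>W x\<bar> \<le> A + \<bar>x\<bar>" for x
    unfolding A_def by (rule lipschitz_abs_le_linear[OF piecewise_unit_slope_lipschitz[OF W]])
  obtain c where c: "c \<ge> 0" "\<And>x. x \<le> T \<Longrightarrow> norm (f x) \<le> c * exp x"
    using exp_bounded_leftE[OF f_bd, of T] by blast
  obtain c' where c': "c' \<ge> 0" "\<And>x. x \<le> T \<Longrightarrow> norm (f' x) \<le> c' * exp x"
    using exp_bounded_leftE[OF f'_bd, of T] by blast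
  have exp_half_int: "(\<lambda>x. C * exp (x/2)) integrable_on {..T}" for C
    using integrable_on_exp_atMost[of "1/2" C T] by simp
  define a where "a n = T - real n" for n :: nat
  have a: "filterlim a at_bot sequentially" unfolding a_def by real_asymp
  have a_le: "a n \<le> T" for n by (simp add: a_def)
  have Wf'_int: "(\<lambda>x. of_real (W x) * f' x) integrable_on {s..T}" for s
    using W f'_cont unfolding piecewise_unit_slope_def
    by (intro integrable_continuous_interval continuous_intros) (auto intro: continuous_on_subset)
  have Wf'_le: "norm (of_real (W x) * f' x) \<le> c' * K * exp (x/2)" if "x \<le> T" for x
    unfolding K_def by (rule norm_linear_growth_mult_le[OF W_le c'(2)]) (use c' that in \<open>auto simp: A_def\<close>)
  note DC = dominated_convergence_atMost[OF exp_half_int Wf'_le Wf'_int a]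
  show "(\<lambda>x. of_real (W x) * f' x) integrable_on {..T}" by (rule DC(1))
  have parts: "((\<lambda>x. of_real (w x) * f x) has_integral
      of_real (W T) * f T - of_real (W (a n)) * f (a n) - integral {a n..T} (\<lambda>x. of_real (W x) * f' x)) {a n..T}" for n
    using has_integral_diff[OF has_integral_product_rule_interval[OF W f_deriv a_le]
        integrable_integral[OF Wf'_int]] by simp
  have "\<forall>n. norm (of_real (W (a n)) * f (a n)) \<le> c * K * exp (a n / 2)"
    unfolding K_def using c a_le
    by (intro allI norm_linear_growth_mult_le[OF W_le c(2)]) (auto simp: A_def)
  moreover have "(\<lambda>n. exp (a n / 2)) \<longlonglongrightarrow> 0" unfolding a_def by real_asymp
  then have "(\<lambda>n. c * K * exp (a n / 2)) \<longlonglongrightarrow> 0" by (rule tendsto_mult_right_zero)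
  ultimately have boundary: "(\<lambda>n. of_real (W (a n)) * f (a n)) \<longlonglongrightarrow> 0"
    by (rule Lim_null_comparison[OF always_eventually])
  have wf_le: "norm (of_real (w x) * f x) \<le> c * exp (\<bar>T\<bar>/2) * exp (x/2)" if "x \<le> T" for x
  proof -
    have "norm (of_real (w x) * f x) \<le> 1 * (c * exp x)"
      unfolding norm_mult using W c that by (intro mult_mono) (auto simp: piecewise_unit_slope_def)
    also have "\<dots> = c * exp (x/2) * exp (x/2)" by (simp add: mult.assoc flip: exp_add)
    also have "\<dots> \<le> c * exp (\<bar>T\<bar>/2) * exp (x/2)"
      using c that by (intro mult_right_mono mult_left_mono) auto
    finally show ?thesis .
  qed
  show "((\<lambda>x. of_real (w x) * f x) has_integral
      of_real (W T) * f T - integral {..T} (\<lambda>x. of_real (W x) * f' x)) {..T}"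
    using has_integral_atMost_of_tendsto[OF exp_half_int wf_le parts a]
      tendsto_diff[OF tendsto_diff[OF tendsto_const boundary] DC(2)] by simp
qed

(* After integration by parts only W k and W k (T k) enter; since the W k are uniformly 1-Lipschitz,
   pointwise convergence already gives domination and W k (T k) -> W0 tau. *)
lemma tendsto_integral_unit_slope_mult:
  fixes L L' :: "real \<Rightarrow> complex"
  assumes W: "\<And>k. piecewise_unit_slope (C k) (W k) (w k)" and W0: "piecewise_unit_slope C0 W0 w0"
    and W_lim: "\<And>x. (\<lambda>k. W k x) \<longlonglongrightarrow> W0 x" and T: "T \<longlonglongrightarrow> \<tau>"
    and L_deriv: "\<And>x. (L has_vector_derivative L' x) (at x)" and L'_cont: "continuous_on UNIV L'"
    and L_bd: "exp_bounded_left L" and L'_bd: "exp_bounded_left L'"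
  shows "(\<lambda>k. integral {..T k} (\<lambda>x. of_real (w k x) * L x))
           \<longlonglongrightarrow> integral {..\<tau>} (\<lambda>x. of_real (w0 x) * L x)"
proof -
  note parts = has_integral_by_parts_atMost[OF _ L_deriv L'_cont L_bd L'_bd]
  have W_lip: "1-lipschitz_on UNIV (W k)" for k
    using piecewise_unit_slope_lipschitz[OF W] .
  obtain U where TU: "\<And>k. T k \<le> U" using convergent_bounded_above[OF T] by blast
  obtain A where A: "\<And>k. \<bar>W k 0\<bar> \<le> A"
    using convergent_bounded_above[OF tendsto_rabs[OF W_lim[of 0]]] by blast
  obtain c where c: "c \<ge> 0" "\<And>x. x \<le> U \<Longrightarrow> norm (L' x) \<le> c * exp x"
    using exp_bounded_leftE[OF L'_bd, of U] by blast
  define K where "K = c * ((A + \<bar>U\<bar>) * exp (\<bar>U\<bar>/2) + 2)"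
  have WL'_le: "norm (of_real (W k x) * L' x) \<le> K * exp ((1/2) * x)" if "x \<le> U" for k x
  proof -
    have "\<bar>W k x\<bar> \<le> A + \<bar>x\<bar>"
      using lipschitz_abs_le_linear[OF W_lip, of k x] A[of k] by linarith
    then show ?thesis
      unfolding K_def using norm_linear_growth_mult_le[OF _ c(2)] A[of k] c(1) that by force
  qed
  have WL'_pointwise: "(\<lambda>k. of_real (W k x) * L' x) \<longlonglongrightarrow> of_real (W0 x) * L' x" for x
    by (intro tendsto_mult_right tendsto_of_real W_lim)
  have WL'_lim: "(\<lambda>k. integral {..T k} (\<lambda>x. of_real (W k x) * L' x))
      \<longlonglongrightarrow> integral {..\<tau>} (\<lambda>x. of_real (W0 x) * L' x)"
    by (rule dominated_convergence_atMost_moving(2)[OF parts(1)[OF W] integrable_on_exp_atMost WL'_le _ T TU])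
      (use WL'_pointwise in auto)
  have "(\<lambda>k. W k (T k) - W k \<tau>) \<longlonglongrightarrow> 0"
  proof (rule Lim_null_comparison[OF always_eventually])
    show "\<forall>k. norm (W k (T k) - W k \<tau>) \<le> \<bar>T k - \<tau>\<bar>"
      using lipschitz_onD[OF W_lip] by (simp add: dist_real_def)
    show "(\<lambda>k. \<bar>T k - \<tau>\<bar>) \<longlonglongrightarrow> 0"
      using T by (intro tendsto_rabs_zero LIM_zero)
  qed
  from tendsto_add[OF this W_lim[of \<tau>]] have WT: "(\<lambda>k. W k (T k)) \<longlonglongrightarrow> W0 \<tau>" by simp
  have "continuous_on UNIV L"
    using L_deriv by (meson continuous_at_imp_continuous_on has_vector_derivative_continuous)
  then have LT: "(\<lambda>k. L (T k)) \<longlonglongrightarrow> L \<tau>"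
    by (intro isCont_tendsto_compose[OF _ T]) (simp add: continuous_on_eq_continuous_at)
  have "(\<lambda>k. of_real (W k (T k)) * L (T k) - integral {..T k} (\<lambda>x. of_real (W k x) * L' x))
      \<longlonglongrightarrow> of_real (W0 \<tau>) * L \<tau> - integral {..\<tau>} (\<lambda>x. of_real (W0 x) * L' x)"
    by (intro tendsto_intros WT LT WL'_lim)
  then show ?thesis
    using integral_unique[OF parts(2)[OF W]] integral_unique[OF parts(2)[OF W0]] by simp
qed

section \<open>Lattice paths\<close>

definition lattice_slope :: "(real \<Rightarrow> real) \<Rightarrow> int \<Rightarrow> real" where
  "lattice_slope b a = b (of_int a + 1) - b (of_int a)"

lemma lattice_path_cell:
  assumes "lattice_path b"
  shows lattice_slope_cases: "lattice_slope b a \<in> {1, -1}"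
    and lattice_path_affine_on_cell:
      "\<And>x. x \<in> {of_int a..of_int a + 1} \<Longrightarrow> b x = b (of_int a) + lattice_slope b a * (x - of_int a)"
proof -
  obtain s where s: "s \<in> {1, -1::real}"
    and affine: "\<forall>x\<in>{of_int a<..<of_int a + 1}. b x = b (of_int a) + s * (x - of_int a)"
    using assms unfolding lattice_path_def by blast
  have b_cont: "continuous_on UNIV b" using assms unfolding lattice_path_def by blast
  have closed: "b x = b (of_int a) + s * (x - of_int a)" if "x \<in> {of_int a..of_int a + 1}" for x
  proof -
    have "continuous_on (closure {of_int a<..<of_int a + 1}) (\<lambda>x. b x - (b (of_int a) + s * (x - of_int a)))"
      by (intro continuous_intros continuous_on_subset[OF b_cont]) auto
    moreover have "b y - (b (of_int a) + s * (y - of_int a)) = 0" if "y \<in> {of_int a<..<of_int a + 1}" for y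
      using affine that by simp
    moreover have "x \<in> closure {of_int a<..<of_int a + 1}" using that by simp
    ultimately have "b x - (b (of_int a) + s * (x - of_int a)) = 0"
      by (rule continuous_constant_on_closure)
    then show ?thesis by simp
  qed
  have slope: "lattice_slope b a = s"
    using closed[of "of_int a + 1"] by (simp add: lattice_slope_def)
  show "lattice_slope b a \<in> {1, -1}" using s slope by simp
  show "b x = b (of_int a) + lattice_slope b a * (x - of_int a)" if "x \<in> {of_int a..of_int a + 1}" for x
    unfolding slope by (rule closed[OF that])
qed

lemma lattice_path_has_real_derivative:
  assumes b: "lattice_path b" and x: "x \<in> {of_int a<..<of_int a + 1}"
  shows "(b has_real_derivative lattice_slope b a) (at x)"
proof (rule has_field_derivative_transform_within_open[OF _ _ x])
  show "((\<lambda>y. b (of_int a) + lattice_slope b a * (y - of_int a)) has_real_derivative lattice_slope b a) (at x)"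
    by (auto intro!: derivative_eq_intros)
  show "b (of_int a) + lattice_slope b a * (y - of_int a) = b y" if "y \<in> {of_int a<..<of_int a + 1}" for y
    using lattice_path_affine_on_cell[OF b, of y a] that by simp
qed simp

lemma deriv_lattice_path_half:
  assumes "lattice_path b"
  shows "deriv b (of_int j + 1/2) = lattice_slope b j"
  by (rule DERIV_imp_deriv[OF lattice_path_has_real_derivative[OF assms, of _ j]]) auto

lemma piecewise_unit_slope_rescaled_lattice_path:
  assumes b: "lattice_path b" and r: "r > 0"
  shows "piecewise_unit_slope (range (\<lambda>j. r * of_int j)) (\<lambda>x. r * b (x / r)) (\<lambda>x. lattice_slope b \<lfloor>x / r\<rfloor>)"
  unfolding piecewise_unit_slope_def
proof (intro conjI allI impI)
  fix lo hi :: real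
  have "range (\<lambda>j. r * of_int j) \<inter> {lo..hi} \<subseteq> (\<lambda>j. r * of_int j) ` {\<lceil>lo / r\<rceil>..\<lfloor>hi / r\<rfloor>}"
  proof
    fix x assume "x \<in> range (\<lambda>j. r * of_int j) \<inter> {lo..hi}"
    then obtain j where j: "x = r * of_int j" "lo \<le> r * of_int j" "r * of_int j \<le> hi" by auto
    then have "lo / r \<le> of_int j" "of_int j \<le> hi / r"
      using r by (simp_all add: pos_divide_le_eq pos_le_divide_eq mult.commute)
    then have "j \<in> {\<lceil>lo / r\<rceil>..\<lfloor>hi / r\<rfloor>}" by (simp add: ceiling_le_iff le_floor_iff)
    with j show "x \<in> (\<lambda>j. r * of_int j) ` {\<lceil>lo / r\<rceil>..\<lfloor>hi / r\<rfloor>}" by blast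
  qed
  then show "finite (range (\<lambda>j. r * of_int j) \<inter> {lo..hi})"
    by (rule finite_subset) simp
next
  have b_cont: "continuous_on UNIV b" using b unfolding lattice_path_def by blast
  show "continuous_on UNIV (\<lambda>x. r * b (x / r))"
    using r by (intro continuous_intros continuous_on_compose2[OF b_cont]) auto
next
  fix x assume "x \<notin> range (\<lambda>j. r * of_int j)"
  have "x / r \<noteq> of_int \<lfloor>x / r\<rfloor>"
  proof
    assume "x / r = of_int \<lfloor>x / r\<rfloor>"
    then have "x = r * of_int \<lfloor>x / r\<rfloor>" using r by (simp add: field_simps)
    with \<open>x \<notin> range (\<lambda>j. r * of_int j)\<close> show False by blast
  qed
  then have "x / r \<in> {of_int \<lfloor>x / r\<rfloor><..<of_int \<lfloor>x / r\<rfloor> + 1}"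
    by (auto simp: less_le) linarith
  then have "(b has_real_derivative lattice_slope b \<lfloor>x / r\<rfloor>) (at (x / r))"
    by (rule lattice_path_has_real_derivative[OF b])
  moreover have "((\<lambda>x. x / r) has_real_derivative 1 / r) (at x)"
    using r by (auto intro!: derivative_eq_intros)
  ultimately have "((\<lambda>x. b (x / r)) has_real_derivative lattice_slope b \<lfloor>x / r\<rfloor> * (1 / r)) (at x)"
    by (rule DERIV_chain2)
  from DERIV_cmult[OF this, of r] r
  show "((\<lambda>x. r * b (x / r)) has_real_derivative lattice_slope b \<lfloor>x / r\<rfloor>) (at x)"
    by simp
next
  fix x show "\<bar>lattice_slope b \<lfloor>x / r\<rfloor>\<bar> \<le> 1"
    using lattice_slope_cases[OF b, of "\<lfloor>x / r\<rfloor>"] by auto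
qed

lemma lattice_path_reflect:
  assumes b: "lattice_path b"
  shows "lattice_path (\<lambda>x. b (- x))"
  unfolding lattice_path_def
proof (intro conjI allI)
  have b_cont: "continuous_on UNIV b" using b unfolding lattice_path_def by blast
  show "continuous_on UNIV (\<lambda>x. b (- x))"
    by (intro continuous_on_compose2[OF b_cont] continuous_intros) auto
next
  fix a :: int
  define a' where "a' = - a - 1"
  note affine = lattice_path_affine_on_cell[OF b, of _ a']
  have b_a: "b (- of_int a) = b (of_int a') + lattice_slope b a'"
    using affine[of "of_int a' + 1"] by (simp add: a'_def)
  show "\<exists>s\<in>{1, - 1}. \<forall>x\<in>{of_int a<..<of_int a + 1}. b (- x) = b (- of_int a) + s * (x - of_int a)"
  proof (intro bexI ballI)
    fix x assume "x \<in> {real_of_int a<..<real_of_int a + 1}"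
    then have "- x \<in> {of_int a'..of_int a' + 1}" by (auto simp: a'_def)
    from affine[OF this] b_a show "b (- x) = b (- of_int a) + (- lattice_slope b a') * (x - of_int a)"
      by (simp add: a'_def algebra_simps)
  next
    show "- lattice_slope b a' \<in> {1, -1}" using lattice_slope_cases[OF b, of a'] by auto
  qed
qed

lemma Dplus_iff_Dminus_reflect:
  assumes b: "lattice_path b"
  shows "m \<in> Dplus b \<longleftrightarrow> - m \<in> Dminus (\<lambda>x. b (- x))"
proof -
  have deriv_reflect: "deriv (\<lambda>x. b (- x)) (of_int (- j - 1) + 1/2) = - deriv b (of_int j + 1/2)" for j
    using deriv_lattice_path_half[OF lattice_path_reflect[OF b], of "- j - 1"] deriv_lattice_path_half[OF b, of j]
    by (simp add: lattice_slope_def add.commute)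
  show ?thesis
  proof
    assume "m \<in> Dplus b"
    then obtain j :: int where j: "m = of_int j + 1/2" "deriv b m = -1" unfolding Dplus_def by blast
    have e: "- m = of_int (- j - 1) + 1/2" using j(1) by simp
    have "deriv (\<lambda>x. b (- x)) (- m) = 1"
      unfolding e using deriv_reflect[of j] j by simp
    with e show "- m \<in> Dminus (\<lambda>x. b (- x))" unfolding Dminus_def by blast
  next
    assume "- m \<in> Dminus (\<lambda>x. b (- x))"
    then obtain i :: int where i: "- m = of_int i + 1/2" "deriv (\<lambda>x. b (- x)) (- m) = 1"
      unfolding Dminus_def by blast
    have e: "m = of_int (- i - 1) + 1/2" using i(1) by simp
    have "deriv b m = - deriv (\<lambda>x. b (- x)) (- m)"
      unfolding i(1) e using deriv_reflect[of "- i - 1"] by simp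
    with i(2) have "deriv b m = -1" by simp
    with e show "m \<in> Dplus b" unfolding Dplus_def by blast
  qed
qed

section \<open>Riemann sums over the ascending steps\<close>

lemma has_integral_half_integer_step_interval:
  fixes \<phi> :: "real \<Rightarrow> complex"
  assumes r: "r > 0"
  shows "((\<lambda>x. \<phi> (of_int \<lfloor>x / r\<rfloor> + 1/2)) has_integral
           of_real r * (\<Sum>i<n. \<phi> (of_int (t - 1 - int i) + 1/2))) {r * (of_int t - real n)..r * of_int t}"
proof (induction n)
  case 0
  show ?case by (simp add: has_integral_refl)
next
  case (Suc n)
  define lo where "lo = r * (of_int t - real (Suc n))"
  define mid where "mid = r * (of_int t - real n)"
  define j where "j = t - 1 - int n"
  have lo_mid: "lo \<le> mid" "mid - lo = r" using r by (simp_all add: lo_def mid_def algebra_simps)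
  have "((\<lambda>x. \<phi> (of_int \<lfloor>x / r\<rfloor> + 1/2)) has_integral of_real r * \<phi> (of_int j + 1/2)) {lo..mid}"
  proof (rule has_integral_spike_finite[where S = "{mid}" and f = "\<lambda>x. \<phi> (of_int j + 1/2)"])
    fix x assume x: "x \<in> {lo..mid} - {mid}"
    have "r * of_int j \<le> x" "x < r * (of_int j + 1)"
      using x by (auto simp: lo_def mid_def j_def algebra_simps)
    then have "of_int j \<le> x / r" "x / r < of_int j + 1"
      using r by (simp_all add: pos_le_divide_eq pos_divide_less_eq mult.commute)
    then have "\<lfloor>x / r\<rfloor> = j" by (simp add: floor_eq_iff)
    then show "\<phi> (of_int \<lfloor>x / r\<rfloor> + 1/2) = \<phi> (of_int j + 1/2)" by simp
  next
    show "((\<lambda>x. \<phi> (of_int j + 1/2)) has_integral of_real r * \<phi> (of_int j + 1/2)) {lo..mid}"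
      using has_integral_const_real[of "\<phi> (of_int j + 1/2)" lo mid] lo_mid
      by (simp add: scaleR_conv_of_real)
  qed simp
  from has_integral_combine[OF lo_mid(1) _ this Suc.IH[folded mid_def]]
  have "((\<lambda>x. \<phi> (of_int \<lfloor>x / r\<rfloor> + 1/2)) has_integral
      of_real r * \<phi> (of_int j + 1/2) + of_real r * (\<Sum>i<n. \<phi> (of_int (t - 1 - int i) + 1/2))) {lo..r * of_int t}"
    using r by (simp add: mid_def)
  then show ?case by (simp add: lo_def j_def algebra_simps)
qed

lemma has_sum_half_integers_below:
  fixes \<phi> :: "real \<Rightarrow> 'a::banach"
  assumes "summable (\<lambda>n. norm (\<phi> (of_int (t - 1 - int n) + 1/2)))"
  shows "(\<phi> has_sum (\<Sum>n. \<phi> (of_int (t - 1 - int n) + 1/2))) {m. \<exists>j::int. j < t \<and> m = of_int j + 1/2}"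
proof -
  have "bij_betw (\<lambda>n. of_int (t - 1 - int n) + 1/2 :: real) UNIV {m. \<exists>j::int. j < t \<and> m = of_int j + 1/2}"
  proof (rule bij_betwI')
    fix n :: nat
    show "of_int (t - 1 - int n) + 1/2 \<in> {m. \<exists>j::int. j < t \<and> m = of_int j + 1/2}"
      by (intro CollectI exI[of _ "t - 1 - int n"]) simp
  next
    fix y assume "y \<in> {m. \<exists>j::int. j < t \<and> m = of_int j + 1/2}"
    then obtain j where j: "j < t" "y = of_int j + 1/2" by blast
    then have "y = of_int (t - 1 - int (nat (t - 1 - j))) + 1/2" by simp
    then show "\<exists>n\<in>UNIV. y = of_int (t - 1 - int n) + 1/2" by blast
  qed simp
  moreover have "((\<lambda>n. \<phi> (of_int (t - 1 - int n) + 1/2)) has_sum (\<Sum>n. \<phi> (of_int (t - 1 - int n) + 1/2))) UNIV"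
    by (rule norm_summable_imp_has_sum[OF assms summable_sums[OF summable_norm_cancel[OF assms]]])
  ultimately show ?thesis
    using has_sum_reindex_bij_betw by blast
qed

lemma has_integral_half_integer_step_atMost:
  fixes \<phi> :: "real \<Rightarrow> complex"
  assumes r: "r > 0"
    and bound: "\<And>j::int. j \<le> t \<Longrightarrow> norm (\<phi> (of_int j + 1/2)) \<le> K * exp (r * of_int j)"
  shows "((\<lambda>x. \<phi> (of_int \<lfloor>x / r\<rfloor> + 1/2)) has_integral
           of_real r * (\<Sum>\<^sub>\<infinity>m\<in>{m. \<exists>j::int. j < t \<and> m = of_int j + 1/2}. \<phi> m)) {..r * of_int t}"
proof -
  define a where "a n = \<phi> (of_int (t - 1 - int n) + 1/2)" for n
  have K: "K \<ge> 0"
    using order_trans[OF norm_ge_zero bound[of t]] by (simp add: zero_le_mult_iff)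
  have a_le: "norm (a n) \<le> K * exp (r * (of_int t - 1)) * exp (- r) ^ n" for n
  proof -
    have "norm (a n) \<le> K * exp (r * of_int (t - 1 - int n))" unfolding a_def by (rule bound) simp
    also have "r * of_int (t - 1 - int n) = r * (of_int t - 1) + real n * (- r)"
      by (simp add: algebra_simps)
    also have "exp (r * (of_int t - 1) + real n * (- r)) = exp (r * (of_int t - 1)) * exp (- r) ^ n"
      by (simp only: exp_add exp_of_nat_mult)
    finally show ?thesis by (simp add: mult.assoc)
  qed
  have "summable (\<lambda>n. K * exp (r * (of_int t - 1)) * exp (- r) ^ n)"
    using r by (intro summable_mult summable_geometric) simp
  then have a_norm_summable: "summable (\<lambda>n. norm (a n))"
    by (rule summable_comparison_test[rotated]) (use a_le in auto)
  then have a_sums: "a sums suminf a" by (rule summable_sums[OF summable_norm_cancel])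
  have sum_eq: "(\<Sum>\<^sub>\<infinity>m\<in>{m. \<exists>j::int. j < t \<and> m = of_int j + 1/2}. \<phi> m) = suminf a"
    using has_sum_half_integers_below[OF a_norm_summable[unfolded a_def]] unfolding a_def
    by (rule infsumI)
  have step_le: "norm (\<phi> (of_int \<lfloor>x / r\<rfloor> + 1/2)) \<le> K * exp (1 * x)" if "x \<le> r * of_int t" for x
  proof -
    have "x / r \<le> of_int t" using that r by (simp add: pos_divide_le_eq mult.commute)
    then have "\<lfloor>x / r\<rfloor> \<le> t" by linarith
    then have "norm (\<phi> (of_int \<lfloor>x / r\<rfloor> + 1/2)) \<le> K * exp (r * of_int \<lfloor>x / r\<rfloor>)" by (rule bound)
    also have "r * of_int \<lfloor>x / r\<rfloor> \<le> x"
      using r mult_left_mono[OF of_int_floor_le[of "x / r"], of r] by simp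
    then have "K * exp (r * of_int \<lfloor>x / r\<rfloor>) \<le> K * exp (1 * x)" using K by (intro mult_left_mono) auto
    finally show ?thesis .
  qed
  have "filterlim (\<lambda>n. r * (of_int t - real n)) at_bot sequentially"
    using r by real_asymp
  moreover have "(\<lambda>n. of_real r * (\<Sum>i<n. a i)) \<longlonglongrightarrow> of_real r * suminf a"
    using a_sums unfolding sums_def by (intro tendsto_intros)
  ultimately show ?thesis
    unfolding sum_eq a_def
    by (intro has_integral_atMost_of_tendsto[OF integrable_on_exp_atMost step_le
          has_integral_half_integer_step_interval[OF r]]) auto
qed

(* On the cell [r j, r (j + 1)) the factor (1 + slope)/2 is 1 if b ascends on (j, j + 1) and 0 otherwise. *)
lemma has_integral_Dminus_sum:
  fixes L :: "real \<Rightarrow> complex"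
  assumes b: "lattice_path b" and r: "r > 0" and L_bd: "exp_bounded_left L"
  shows "((\<lambda>x. of_real ((1 + lattice_slope b \<lfloor>x / r\<rfloor>) / 2) * L (r * (of_int \<lfloor>x / r\<rfloor> + 1/2))) has_integral
           of_real r * (\<Sum>\<^sub>\<infinity>m\<in>{m \<in> Dminus b. m < of_int t}. L (r * m))) {..r * of_int t}"
proof -
  define \<phi> where "\<phi> m = (if deriv b m = 1 then L (r * m) else 0)" for m
  obtain c where c: "c \<ge> 0" "\<And>x. x \<le> r * of_int t + r \<Longrightarrow> norm (L x) \<le> c * exp x"
    using exp_bounded_leftE[OF L_bd] by blast
  have bound: "norm (\<phi> (of_int j + 1/2)) \<le> c * exp (r / 2) * exp (r * of_int j)" if "j \<le> t" for j
  proof -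
    have "r * of_int j \<le> r * of_int t" using that r by simp
    then have "r * (of_int j + 1/2) \<le> r * of_int t + r" using r unfolding distrib_left by linarith
    then have "norm (L (r * (of_int j + 1/2))) \<le> c * exp (r * (of_int j + 1/2))"
      by (rule c(2))
    then show ?thesis
      using c(1) by (simp add: \<phi>_def algebra_simps flip: exp_add)
  qed
  have step: "((\<lambda>x. \<phi> (of_int \<lfloor>x / r\<rfloor> + 1/2)) has_integral
      of_real r * (\<Sum>\<^sub>\<infinity>m\<in>{m. \<exists>j::int. j < t \<and> m = of_int j + 1/2}. \<phi> m)) {..r * of_int t}"
    by (rule has_integral_half_integer_step_atMost[OF r bound])
  have "(\<Sum>\<^sub>\<infinity>m\<in>{m \<in> Dminus b. m < of_int t}. L (r * m))
      = (\<Sum>\<^sub>\<infinity>m\<in>{m. \<exists>j::int. j < t \<and> m = of_int j + 1/2}. \<phi> m)"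
  proof (rule infsum_cong_neutral)
    fix m assume "m \<in> {m. \<exists>j::int. j < t \<and> m = of_int j + 1/2} - {m \<in> Dminus b. m < of_int t}"
    then show "\<phi> m = 0" unfolding Dminus_def \<phi>_def by auto
  next
    fix m assume "m \<in> {m \<in> Dminus b. m < of_int t} - {m. \<exists>j::int. j < t \<and> m = of_int j + 1/2}"
    then obtain j :: int where j: "m = of_int j + 1/2" "m < of_int t"
      and "m \<notin> {m. \<exists>j::int. j < t \<and> m = of_int j + 1/2}"
      unfolding Dminus_def by blast
    moreover have "j < t" using j by linarith
    ultimately show "L (r * m) = 0" by blast
  next
    fix m assume "m \<in> {m \<in> Dminus b. m < of_int t} \<inter> {m. \<exists>j::int. j < t \<and> m = of_int j + 1/2}"
    then show "L (r * m) = \<phi> m" unfolding Dminus_def \<phi>_def by auto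
  qed
  moreover have "(\<lambda>x. \<phi> (of_int \<lfloor>x / r\<rfloor> + 1/2))
      = (\<lambda>x. of_real ((1 + lattice_slope b \<lfloor>x / r\<rfloor>) / 2) * L (r * (of_int \<lfloor>x / r\<rfloor> + 1/2)))"
  proof
    fix x
    show "\<phi> (of_int \<lfloor>x / r\<rfloor> + 1/2)
      = of_real ((1 + lattice_slope b \<lfloor>x / r\<rfloor>) / 2) * L (r * (of_int \<lfloor>x / r\<rfloor> + 1/2))"
      using lattice_slope_cases[OF b, of "\<lfloor>x / r\<rfloor>"] deriv_lattice_path_half[OF b]
      by (auto simp: \<phi>_def)
  qed
  ultimately show ?thesis using step by (simp only:)
qed

section \<open>The logarithmic factors\<close>

lemma one_minus_exp_mult_notin_nonpos_Reals:
  assumes w: "w \<notin> complex_of_real ` {0..}"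
  shows "1 - of_real (exp M) * w \<notin> \<real>\<^sub>\<le>\<^sub>0"
proof
  assume "1 - of_real (exp M) * w \<in> \<real>\<^sub>\<le>\<^sub>0"
  then obtain c where c: "1 - of_real (exp M) * w = of_real c" "c \<le> 0"
    by (auto simp: nonpos_Reals_def)
  then have "w = of_real ((1 - c) / exp M)"
    by (simp add: field_simps)
  moreover have "(1 - c) / exp M \<ge> 0" using c(2) by simp
  ultimately show False using w by blast
qed

lemma has_vector_derivative_Ln_one_minus_exp_mult:
  assumes w: "w \<notin> complex_of_real ` {0..}"
  shows "((\<lambda>M. Ln (1 - of_real (exp M) * w)) has_vector_derivative
           - (of_real (exp M) * w) / (1 - of_real (exp M) * w)) (at M)"
proof -
  have "(Ln has_field_derivative inverse (1 - exp (of_real M) * w)) (at (1 - exp (of_real M) * w))"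
    using has_field_derivative_Ln[OF one_minus_exp_mult_notin_nonpos_Reals[OF w, of M]]
    by (simp add: exp_of_real)
  moreover have "((\<lambda>u. 1 - exp u * w) has_field_derivative - (exp (of_real M) * w)) (at (of_real M))"
    by (auto intro!: derivative_eq_intros)
  ultimately have "((\<lambda>u. Ln (1 - exp u * w)) has_field_derivative
      inverse (1 - exp (of_real M) * w) * (- (exp (of_real M) * w))) (at (of_real M))"
    by (rule DERIV_chain2)
  from has_vector_derivative_real_field[OF this]
  show ?thesis by (simp add: exp_of_real divide_inverse mult_ac)
qed

lemma continuous_on_Ln_one_minus_exp_mult_deriv:
  assumes w: "w \<notin> complex_of_real ` {0..}"
  shows "continuous_on UNIV (\<lambda>M. - (of_real (exp M) * w) / (1 - of_real (exp M) * w))"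
  using one_minus_exp_mult_notin_nonpos_Reals[OF w]
  by (intro continuous_intros) (metis nonpos_Reals_zero_I)

lemma exp_bounded_left_Ln_one_minus_exp_mult:
  assumes w: "w \<notin> complex_of_real ` {0..}"
  shows "exp_bounded_left (\<lambda>M. Ln (1 - of_real (exp M) * w))"
    and "exp_bounded_left (\<lambda>M. - (of_real (exp M) * w) / (1 - of_real (exp M) * w))"
proof -
  have w0: "norm w > 0" using w by (metis image_eqI atLeast_iff norm_le_zero_iff not_le of_real_0 order_refl)
  have small: "norm (of_real (exp M) * w) \<le> 1/4" if "M \<le> ln (1 / (4 * norm w))" for M
  proof -
    have "exp M \<le> 1 / (4 * norm w)"
      using that w0 by (metis exp_le_cancel_iff exp_ln divide_pos_pos mult_pos_pos zero_less_numeral zero_less_one)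
    then show ?thesis using w0 by (simp add: norm_mult field_simps)
  qed
  show "exp_bounded_left (\<lambda>M. Ln (1 - of_real (exp M) * w))"
  proof (rule exp_bounded_leftI)
    show "continuous_on UNIV (\<lambda>M. Ln (1 - of_real (exp M) * w))"
      using has_vector_derivative_Ln_one_minus_exp_mult[OF w]
      by (meson continuous_at_imp_continuous_on has_vector_derivative_continuous)
    fix M assume "M \<le> ln (1 / (4 * norm w))"
    then have "norm (- (of_real (exp M) * w)) < 1/2" using small by fastforce
    then have "norm (Ln (1 + - (of_real (exp M) * w))) \<le> 2 * norm (- (of_real (exp M) * w))"
      by (rule norm_Ln_le)
    then show "norm (Ln (1 - of_real (exp M) * w)) \<le> (2 * norm w) * exp M"
      by (simp add: norm_mult mult_ac)
  qed
  show "exp_bounded_left (\<lambda>M. - (of_real (exp M) * w) / (1 - of_real (exp M) * w))"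
  proof (rule exp_bounded_leftI[OF continuous_on_Ln_one_minus_exp_mult_deriv[OF w]])
    fix M assume M: "M \<le> ln (1 / (4 * norm w))"
    have "norm (1 - of_real (exp M) * w) \<ge> 1/2"
      using norm_triangle_ineq2[of 1 "of_real (exp M) * w"] small[OF M] by simp
    then have "norm (- (of_real (exp M) * w) / (1 - of_real (exp M) * w)) \<le> norm (of_real (exp M) * w) / (1/2)"
      unfolding norm_divide norm_minus_cancel by (intro divide_left_mono) auto
    then show "norm (- (of_real (exp M) * w) / (1 - of_real (exp M) * w)) \<le> (2 * norm w) * exp M"
      by (simp add: norm_mult mult_ac)
  qed
qed

section \<open>The limit of the rescaled logarithms\<close>

lemma abs_cell_midpoint_diff_le:
  fixes r x :: real
  assumes r: "r > 0"
  shows "\<bar>r * (of_int \<lfloor>x / r\<rfloor> + 1/2) - x\<bar> \<le> r"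
proof -
  have "r * of_int \<lfloor>x / r\<rfloor> \<le> x" "x < r * of_int \<lfloor>x / r\<rfloor> + r"
    using r mult_left_mono[OF of_int_floor_le[of "x / r"], of r]
      mult_strict_left_mono[OF real_of_int_floor_add_one_gt[of "x / r"] r]
    by (simp_all add: algebra_simps)
  then show ?thesis using r by (simp add: algebra_simps abs_le_iff)
qed

(* err is the cost of evaluating L at the point instead of the midpoint of its cell. *)
lemma Dminus_sum_eq_integrals:
  fixes L L' :: "real \<Rightarrow> complex"
  assumes b: "lattice_path b" and r: "r > 0"
    and L_deriv: "\<And>x. (L has_vector_derivative L' x) (at x)" and L'_cont: "continuous_on UNIV L'"
    and L_bd: "exp_bounded_left L" and L'_bd: "exp_bounded_left L'"
  defines "\<sigma> \<equiv> \<lambda>x. lattice_slope b \<lfloor>x / r\<rfloor>"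
    and "err \<equiv> \<lambda>x. of_real ((1 + lattice_slope b \<lfloor>x / r\<rfloor>) / 2) * (L (r * (of_int \<lfloor>x / r\<rfloor> + 1/2)) - L x)"
  shows "err integrable_on {..r * of_int t}"
    and "of_real r * (\<Sum>\<^sub>\<infinity>m\<in>{m \<in> Dminus b. m < of_int t}. L (r * m))
         = integral {..r * of_int t} err + (1/2) * integral {..r * of_int t} L
           + (1/2) * integral {..r * of_int t} (\<lambda>x. of_real (\<sigma> x) * L x)"
proof -
  define T where "T = r * of_int t"
  have L_int: "L integrable_on {..T}"
    using L_deriv L_bd
    by (intro integrable_on_atMost_exp_bounded_left)
      (meson continuous_at_imp_continuous_on has_vector_derivative_continuous)
  have \<sigma>L_int: "(\<lambda>x. of_real (\<sigma> x) * L x) integrable_on {..T}"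
    using has_integral_by_parts_atMost(2)[OF piecewise_unit_slope_rescaled_lattice_path[OF b r]
        L_deriv L'_cont L_bd L'_bd]
    unfolding \<sigma>_def by blast
  have step_int: "((\<lambda>x. of_real ((1 + \<sigma> x) / 2) * L (r * (of_int \<lfloor>x / r\<rfloor> + 1/2))) has_integral
      of_real r * (\<Sum>\<^sub>\<infinity>m\<in>{m \<in> Dminus b. m < of_int t}. L (r * m))) {..T}"
    unfolding T_def \<sigma>_def by (rule has_integral_Dminus_sum[OF b r L_bd])
  have "err = (\<lambda>x. of_real ((1 + \<sigma> x) / 2) * L (r * (of_int \<lfloor>x / r\<rfloor> + 1/2))
      - (1/2) * L x - (1/2) * (of_real (\<sigma> x) * L x))"
    by (rule ext) (simp add: err_def \<sigma>_def field_simps)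
  then have "(err has_integral of_real r * (\<Sum>\<^sub>\<infinity>m\<in>{m \<in> Dminus b. m < of_int t}. L (r * m))
      - (1/2) * integral {..T} L - (1/2) * integral {..T} (\<lambda>x. of_real (\<sigma> x) * L x)) {..T}"
    using L_int \<sigma>L_int
    by (simp only:) (intro has_integral_diff step_int has_integral_mult_right integrable_integral)
  then show "err integrable_on {..r * of_int t}"
    and "of_real r * (\<Sum>\<^sub>\<infinity>m\<in>{m \<in> Dminus b. m < of_int t}. L (r * m))
         = integral {..r * of_int t} err + (1/2) * integral {..r * of_int t} L
           + (1/2) * integral {..r * of_int t} (\<lambda>x. of_real (\<sigma> x) * L x)"
    unfolding T_def by (auto dest: integral_unique)
qed

lemma tendsto_Dminus_sum:
  fixes L L' :: "real \<Rightarrow> complex"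
  assumes V_lip: "1-lipschitz_on UNIV V" and V_pw: "piecewise_differentiable_real V"
    and r_pos: "\<And>k. r k > 0" and r_lim: "r \<longlonglongrightarrow> 0" and b_path: "\<And>k. lattice_path (b k)"
    and B_lim: "\<And>x. (\<lambda>k. r k * b k (x / r k)) \<longlonglongrightarrow> V x"
    and t_lim: "(\<lambda>k. r k * of_int (t k)) \<longlonglongrightarrow> \<tau>"
    and L_deriv: "\<And>x. (L has_vector_derivative L' x) (at x)" and L'_cont: "continuous_on UNIV L'"
    and L_bd: "exp_bounded_left L" and L'_bd: "exp_bounded_left L'"
  shows "(\<lambda>M. of_real ((1 + deriv V M) / 2) * L M) integrable_on {..\<tau>}"
    and "(\<lambda>k. of_real (r k) * (\<Sum>\<^sub>\<infinity>m\<in>{m \<in> Dminus (b k). m < of_int (t k)}. L (r k * m)))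
           \<longlonglongrightarrow> integral {..\<tau>} (\<lambda>M. of_real ((1 + deriv V M) / 2) * L M)"
proof -
  define T where "T k = r k * of_int (t k)" for k
  define \<sigma> where "\<sigma> k x = lattice_slope (b k) \<lfloor>x / r k\<rfloor>" for k x
  define mid where "mid k x = r k * (of_int \<lfloor>x / r k\<rfloor> + 1/2)" for k x
  define err where "err k x = of_real ((1 + \<sigma> k x) / 2) * (L (mid k x) - L x)" for k x
  have err_int: "err k integrable_on {..T k}"
    and sum_eq: "of_real (r k) * (\<Sum>\<^sub>\<infinity>m\<in>{m \<in> Dminus (b k). m < of_int (t k)}. L (r k * m))
      = integral {..T k} (err k) + (1/2) * integral {..T k} L + (1/2) * integral {..T k} (\<lambda>x. of_real (\<sigma> k x) * L x)"
    for k
    unfolding err_def mid_def \<sigma>_def T_def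
    using Dminus_sum_eq_integrals[OF b_path r_pos L_deriv L'_cont L_bd L'_bd] by blast+
  obtain C where V: "piecewise_unit_slope C V (\<lambda>x. if x \<in> C then 0 else deriv V x)"
    using piecewise_unit_slope_of_lipschitz[OF V_lip V_pw] by blast
  have B: "piecewise_unit_slope (range (\<lambda>j. r k * of_int j)) (\<lambda>x. r k * b k (x / r k)) (\<sigma> k)" for k
    unfolding \<sigma>_def by (rule piecewise_unit_slope_rescaled_lattice_path[OF b_path r_pos])
  have L_cont: "continuous_on UNIV L"
    using L_deriv by (meson continuous_at_imp_continuous_on has_vector_derivative_continuous)
  have mid_near: "\<bar>mid k x - x\<bar> \<le> r k" for k x
    unfolding mid_def by (rule abs_cell_midpoint_diff_le[OF r_pos])
  have slope_half_le: "\<bar>(1 + \<sigma> k x) / 2\<bar> \<le> 1" for k x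
  proof -
    have "\<bar>\<sigma> k x\<bar> \<le> 1" using B[of k] unfolding piecewise_unit_slope_def by blast
    then show ?thesis by (simp add: abs_le_iff)
  qed
  have err_lim: "(\<lambda>k. integral {..T k} (err k)) \<longlonglongrightarrow> 0"
    unfolding err_def
    by (rule tendsto_integral_shift_error[OF L_cont L_bd mid_near r_lim slope_half_le t_lim[folded T_def]
          err_int[unfolded err_def]])
  have L_lim: "(\<lambda>k. integral {..T k} L) \<longlonglongrightarrow> integral {..\<tau>} L"
    by (rule tendsto_integral_atMost_endpoint[OF L_cont L_bd t_lim[folded T_def]])
  have \<sigma>L_lim: "(\<lambda>k. integral {..T k} (\<lambda>x. of_real (\<sigma> k x) * L x))
      \<longlonglongrightarrow> integral {..\<tau>} (\<lambda>x. of_real (if x \<in> C then 0 else deriv V x) * L x)"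
    by (rule tendsto_integral_unit_slope_mult[OF B V B_lim t_lim[folded T_def] L_deriv L'_cont L_bd L'_bd])
  have VL_halves: "((\<lambda>x. (1/2) * L x + (1/2) * (of_real (if x \<in> C then 0 else deriv V x) * L x)) has_integral
      (1/2) * integral {..\<tau>} L + (1/2) * integral {..\<tau>} (\<lambda>x. of_real (if x \<in> C then 0 else deriv V x) * L x)) {..\<tau>}"
    using integrable_on_atMost_exp_bounded_left[OF L_cont L_bd]
      has_integral_by_parts_atMost(2)[OF V L_deriv L'_cont L_bd L'_bd]
    by (intro has_integral_add has_integral_mult_right integrable_integral) blast+
  have "negligible C"
    using V unfolding piecewise_unit_slope_def by (intro negligible_locally_finite) blast
  then have VL: "((\<lambda>M. of_real ((1 + deriv V M) / 2) * L M) has_integral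
      (1/2) * integral {..\<tau>} L + (1/2) * integral {..\<tau>} (\<lambda>x. of_real (if x \<in> C then 0 else deriv V x) * L x)) {..\<tau>}"
    by (rule has_integral_spike[OF _ _ VL_halves]) (auto simp: algebra_simps)
  then show "(\<lambda>M. of_real ((1 + deriv V M) / 2) * L M) integrable_on {..\<tau>}" by blast
  have "(\<lambda>k. integral {..T k} (err k) + (1/2) * integral {..T k} L + (1/2) * integral {..T k} (\<lambda>x. of_real (\<sigma> k x) * L x))
      \<longlonglongrightarrow> 0 + (1/2) * integral {..\<tau>} L + (1/2) * integral {..\<tau>} (\<lambda>x. of_real (if x \<in> C then 0 else deriv V x) * L x)"
    by (intro tendsto_add tendsto_mult_left err_lim L_lim \<sigma>L_lim)
  then show "(\<lambda>k. of_real (r k) * (\<Sum>\<^sub>\<infinity>m\<in>{m \<in> Dminus (b k). m < of_int (t k)}. L (r k * m)))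
      \<longlonglongrightarrow> integral {..\<tau>} (\<lambda>M. of_real ((1 + deriv V M) / 2) * L M)"
    unfolding sum_eq integral_unique[OF VL] by simp
qed

section \<open>Reflection and the factors of Phi_+\<close>

lemma has_real_derivative_reflect:
  assumes "(V has_real_derivative D) (at (- x))"
  shows "((\<lambda>y. V (- y)) has_real_derivative - D) (at x)"
proof -
  have "((\<lambda>y. V (- y)) has_real_derivative D * (- 1)) (at x)"
    by (rule DERIV_chain2[where f = V and g = "\<lambda>y. - y", OF assms]) (auto intro!: derivative_eq_intros)
  then show ?thesis by simp
qed

lemma piecewise_differentiable_real_reflect:
  assumes "piecewise_differentiable_real V"
  shows "piecewise_differentiable_real (\<lambda>x. V (- x))"
proof -
  obtain C where C: "\<And>a b. finite (C \<inter> {a..b})" "\<And>x. x \<notin> C \<Longrightarrow> V differentiable (at x)"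
    using assms unfolding piecewise_differentiable_real_def by blast
  have "finite (uminus ` C \<inter> {a..b})" for a b
  proof (rule finite_subset)
    show "uminus ` C \<inter> {a..b} \<subseteq> uminus ` (C \<inter> {-b..-a})" by auto
  qed (use C(1) in blast)
  moreover have "(\<lambda>x. V (- x)) differentiable (at x)" if "x \<notin> uminus ` C" for x
  proof -
    have "- x \<notin> C" using that by (metis image_eqI minus_minus)
    then have "(V has_real_derivative deriv V (- x)) (at (- x))"
      using C(2) by (simp add: DERIV_deriv_iff_real_differentiable)
    then show ?thesis
      using has_real_derivative_reflect real_differentiable_def by blast
  qed
  ultimately show ?thesis unfolding piecewise_differentiable_real_def by blast
qed

lemma deriv_reflect:
  fixes V :: "real \<Rightarrow> real"
  assumes "V differentiable (at (- x))"
  shows "deriv (\<lambda>y. V (- y)) x = - deriv V (- x)"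
  using assms by (intro DERIV_imp_deriv has_real_derivative_reflect)
    (simp add: DERIV_deriv_iff_real_differentiable)

lemma lipschitz_on_reflect:
  fixes f :: "real \<Rightarrow> 'a::metric_space"
  assumes "C-lipschitz_on UNIV f"
  shows "C-lipschitz_on UNIV (\<lambda>x. f (- x))"
proof (rule lipschitz_onI)
  fix x y :: real
  have "dist (f (- x)) (f (- y)) \<le> C * dist (- x) (- y)" using lipschitz_onD[OF assms] by blast
  then show "dist (f (- x)) (f (- y)) \<le> C * dist x y" by (simp add: dist_real_def abs_minus_commute)
qed (use lipschitz_on_nonneg[OF assms] in simp)

lemma infsum_Dplus_eq_infsum_Dminus_reflect:
  assumes b: "lattice_path b"
  shows "(\<Sum>\<^sub>\<infinity>m\<in>{m \<in> Dplus b. t < m}. f m) = (\<Sum>\<^sub>\<infinity>m\<in>{m \<in> Dminus (\<lambda>x. b (- x)). m < - t}. f (- m))"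
proof -
  have "{m \<in> Dplus b. t < m} = uminus ` {m \<in> Dminus (\<lambda>x. b (- x)). m < - t}"
  proof (intro equalityI subsetI)
    fix m assume "m \<in> {m \<in> Dplus b. t < m}"
    then have "- m \<in> {m \<in> Dminus (\<lambda>x. b (- x)). m < - t}"
      using Dplus_iff_Dminus_reflect[OF b, of m] by simp
    then show "m \<in> uminus ` {m \<in> Dminus (\<lambda>x. b (- x)). m < - t}"
      by (metis image_eqI minus_minus)
  next
    fix m assume "m \<in> uminus ` {m \<in> Dminus (\<lambda>x. b (- x)). m < - t}"
    then show "m \<in> {m \<in> Dplus b. t < m}"
      using Dplus_iff_Dminus_reflect[OF b, of m] by auto
  qed
  moreover have "inj_on uminus A" for A :: "real set" by (simp add: inj_on_def)
  ultimately show ?thesis by (simp add: infsum_reindex o_def)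
qed

lemma tendsto_Dplus_sum:
  fixes L L' :: "real \<Rightarrow> complex"
  assumes V_lip: "1-lipschitz_on UNIV V" and V_pw: "piecewise_differentiable_real V"
    and r_pos: "\<And>k. r k > 0" and r_lim: "r \<longlonglongrightarrow> 0" and b_path: "\<And>k. lattice_path (b k)"
    and B_lim: "\<And>x. (\<lambda>k. r k * b k (x / r k)) \<longlonglongrightarrow> V x"
    and t_lim: "(\<lambda>k. r k * of_int (t k)) \<longlonglongrightarrow> \<tau>"
    and L_deriv: "\<And>x. (L has_vector_derivative L' x) (at x)" and L'_cont: "continuous_on UNIV L'"
    and L_bd: "exp_bounded_left L" and L'_bd: "exp_bounded_left L'"
  shows "(\<lambda>M. of_real ((1 - deriv V M) / 2) * L (- M)) integrable_on {\<tau>..}"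
    and "(\<lambda>k. of_real (r k) * (\<Sum>\<^sub>\<infinity>m\<in>{m \<in> Dplus (b k). of_int (t k) < m}. L (- (r k * m))))
           \<longlonglongrightarrow> integral {\<tau>..} (\<lambda>M. of_real ((1 - deriv V M) / 2) * L (- M))"
proof -
  have Br_lim: "(\<lambda>k. r k * b k (- (x / r k))) \<longlonglongrightarrow> V (- x)" for x
    using B_lim[of "- x"] by simp
  have tr_lim: "(\<lambda>k. r k * of_int (- t k)) \<longlonglongrightarrow> - \<tau>"
    using tendsto_minus[OF t_lim] by simp
  note minus = tendsto_Dminus_sum[OF lipschitz_on_reflect[OF V_lip] piecewise_differentiable_real_reflect[OF V_pw] r_pos r_lim
      lattice_path_reflect[OF b_path] Br_lim tr_lim L_deriv L'_cont L_bd L'_bd]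
  have sum_eq: "(\<Sum>\<^sub>\<infinity>m\<in>{m \<in> Dplus (b k). of_int (t k) < m}. L (- (r k * m)))
      = (\<Sum>\<^sub>\<infinity>m\<in>{m \<in> Dminus (\<lambda>x. b k (- x)). m < of_int (- t k)}. L (r k * m))" for k
    using infsum_Dplus_eq_infsum_Dminus_reflect[OF b_path[of k], where t = "of_int (t k)" and f = "\<lambda>m. L (- (r k * m))"]
    by simp
  obtain C where C: "\<And>a b. finite (C \<inter> {a..b})" "\<And>x. x \<notin> C \<Longrightarrow> V differentiable (at x)"
    using V_pw unfolding piecewise_differentiable_real_def by blast
  have "((\<lambda>M. of_real ((1 + deriv (\<lambda>x. V (- x)) (- M)) / 2) * L (- M)) has_integral
      integral {..- \<tau>} (\<lambda>M. of_real ((1 + deriv (\<lambda>x. V (- x)) M) / 2) * L M)) {\<tau>..}"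
    using has_integral_reflect_image[OF integrable_integral[OF minus(1)]] by simp
  then have reflected: "((\<lambda>M. of_real ((1 - deriv V M) / 2) * L (- M)) has_integral
      integral {..- \<tau>} (\<lambda>M. of_real ((1 + deriv (\<lambda>x. V (- x)) M) / 2) * L M)) {\<tau>..}"
    by (rule has_integral_spike[OF negligible_locally_finite[OF C(1)], rotated])
      (simp add: deriv_reflect C(2))
  then show "(\<lambda>M. of_real ((1 - deriv V M) / 2) * L (- M)) integrable_on {\<tau>..}" by blast
  show "(\<lambda>k. of_real (r k) * (\<Sum>\<^sub>\<infinity>m\<in>{m \<in> Dplus (b k). of_int (t k) < m}. L (- (r k * m))))
      \<longlonglongrightarrow> integral {\<tau>..} (\<lambda>M. of_real ((1 - deriv V M) / 2) * L (- M))"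
    unfolding sum_eq integral_unique[OF reflected] by (rule minus(2))
qed

lemma inverse_notin_nonneg_Reals:
  fixes z :: complex
  assumes "z \<notin> complex_of_real ` {0..}"
  shows "inverse z \<notin> complex_of_real ` {0..}"
proof
  assume "inverse z \<in> complex_of_real ` {0..}"
  then obtain a where "a \<ge> 0" "inverse z = of_real a" by auto
  then have "z = of_real (inverse a)" "inverse a \<ge> 0" by (metis inverse_inverse_eq of_real_inverse, simp)
  with assms show False by blast
qed

lemma lnPhi_exp_minus:
  "lnPhi b (exp (- r)) z t
     = (\<Sum>\<^sub>\<infinity>m\<in>{m \<in> Dminus b. m < t}. Ln (1 - of_real (exp (r * m)) * inverse z))
       - (\<Sum>\<^sub>\<infinity>m\<in>{m \<in> Dplus b. t < m}. Ln (1 - of_real (exp (- (r * m))) * z))"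
proof -
  have "exp (- r) powr (- m) = exp (r * m)" "exp (- r) powr m = exp (- (r * m))" for m
    by (simp_all add: powr_def mult.commute)
  then show ?thesis
    unfolding lnPhi_def by (simp add: divide_inverse[symmetric] mult.commute[of z])
qed

theorem corollaryA2:
  fixes V :: "real \<Rightarrow> real" and r :: "nat \<Rightarrow> real" and b :: "nat \<Rightarrow> real \<Rightarrow> real"
    and t :: "nat \<Rightarrow> int" and \<tau> :: real and z :: complex
  assumes V_cont: "continuous_on UNIV V"
    and V_lip: "1-lipschitz_on UNIV V"
    and V_pw: "piecewise_differentiable_real V"
    and r_pos: "\<And>k. r k > 0"
    and r_lim: "r \<longlonglongrightarrow> 0"
    and b_path: "\<And>k. lattice_path (b k)"
    and B_unif: "uniform_limit UNIV (\<lambda>k \<tau>'. r k * b k (\<tau>' / r k)) V sequentially"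
    and t_lim: "(\<lambda>k. r k * real_of_int (t k)) \<longlonglongrightarrow> \<tau>"
    and z_dom: "z \<notin> complex_of_real ` {0..}"
  shows "(\<lambda>k. complex_of_real (r k) * lnPhi (b k) (exp (- r k)) z (real_of_int (t k)))
         \<longlonglongrightarrow>
           - integral {..\<tau>} (\<lambda>M. - (1/2) * complex_of_real (1 + deriv V M)
                                 * Ln (1 - complex_of_real (exp M) / z))
           + integral {\<tau>..} (\<lambda>M. - (1/2) * complex_of_real (1 - deriv V M)
                                 * Ln (1 - complex_of_real (exp (- M)) * z))"
proof -
  have B_lim: "(\<lambda>k. r k * b k (x / r k)) \<longlonglongrightarrow> V x" for x
    using tendsto_uniform_limitI[OF B_unif] by simp
  have z_inv: "inverse z \<notin> complex_of_real ` {0..}"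
    by (rule inverse_notin_nonneg_Reals[OF z_dom])
  note Ln_facts = has_vector_derivative_Ln_one_minus_exp_mult continuous_on_Ln_one_minus_exp_mult_deriv
    exp_bounded_left_Ln_one_minus_exp_mult
  note minus = tendsto_Dminus_sum[OF V_lip V_pw r_pos r_lim b_path B_lim t_lim Ln_facts[OF z_inv]]
  note plus = tendsto_Dplus_sum[OF V_lip V_pw r_pos r_lim b_path B_lim t_lim Ln_facts[OF z_dom]]
  have "(\<lambda>M. - (1/2) * of_real (1 + deriv V M) * Ln (1 - of_real (exp M) / z))
      = (\<lambda>M. - (of_real ((1 + deriv V M) / 2) * Ln (1 - of_real (exp M) * inverse z)))"
    by (rule ext) (simp add: divide_inverse[symmetric])
  moreover have "(\<lambda>M. - (1/2) * of_real (1 - deriv V M) * Ln (1 - of_real (exp (- M)) * z))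
      = (\<lambda>M. - (of_real ((1 - deriv V M) / 2) * Ln (1 - of_real (exp (- M)) * z)))"
    by (rule ext) simp
  ultimately show ?thesis
    unfolding lnPhi_exp_minus right_diff_distrib integral_neg
    using tendsto_diff[OF minus(2) plus(2)] by simp
qed

end
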